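(* Let $\boldsymbol{x}_p=[i_p,v_p]^{\intercal}$ be the unique $T$-periodic solution of the switched system. Then $$\int_0^{T/2}i_p(t)\,dt=\frac{C}{V_{dc}}\bigl(v_p(T/2)^2-v_p(0)^2\bigr)=C\bigl(v_p(T/2)-v_p(0)\bigr),$$ and consequently $v_p(0)+v_p(T/2)=V_{dc}$.
   Context: Let $R,L,C,V_{dc},T>0$. Let $\boldsymbol{x}(t)=[i(t),v(t)]^{\intercal}$. Define $$A_1=\begin{bmatrix}-\frac RL & -\frac1L\\ \frac1C & 0\end{bmatrix},\quad A_2=\begin{bmatrix}-\frac RL & \frac1L\\ -\frac1C & 0\end{bmatrix},\quad \boldsymbol{b}_1=\begin{bmatrix}\frac{V_{dc}}L\\ 0\end{bmatrix}.$$ The switched system on $t\ge0$ is: $\boldsymbol{x}'=A_1\boldsymbol{x}+\boldsymbol{b}_1$ on each interval $[(k-1)T,(k-1)T+\frac T2]$ and $\boldsymbol{x}'=A_2\boldsymbol{x}$ on each interval $[(k-1)T+\frac T2,kT]$, $k=1,2,\dots$; solutions are continuous. The system has a unique $T$-periodic solution $\boldsymbol{x}_p$. *)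

theory Defs
  imports "HOL-Analysis.Analysis"
begin

text \<open>State x(t) = [i(t), v(t)]; component 1 is the current i, component 2 the voltage v.\<close>

definition A1 :: "real \<Rightarrow> real \<Rightarrow> real \<Rightarrow> real^2^2" where
  "A1 R L C = vector [vector [-R/L, -1/L], vector [1/C, 0]]"

definition A2 :: "real \<Rightarrow> real \<Rightarrow> real \<Rightarrow> real^2^2" where
  "A2 R L C = vector [vector [-R/L, 1/L], vector [-1/C, 0]]"

definition b1 :: "real \<Rightarrow> real \<Rightarrow> real^2" where
  "b1 L Vdc = vector [Vdc/L, 0]"

definition switched_solution ::
  "real \<Rightarrow> real \<Rightarrow> real \<Rightarrow> real \<Rightarrow> real \<Rightarrow> (real \<Rightarrow> real^2) \<Rightarrow> bool" where
  "switched_solution R L C Vdc T x \<longleftrightarrow>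
     continuous_on {0..} x \<and>
     (\<forall>k::nat. \<forall>t\<in>{real k * T .. real k * T + T/2}.
        (x has_vector_derivative (A1 R L C *v x t + b1 L Vdc))
          (at t within {real k * T .. real k * T + T/2})) \<and>
     (\<forall>k::nat. \<forall>t\<in>{real k * T + T/2 .. real (Suc k) * T}.
        (x has_vector_derivative (A2 R L C *v x t))
          (at t within {real k * T + T/2 .. real (Suc k) * T}))"

definition T_periodic_on_nonneg :: "real \<Rightarrow> (real \<Rightarrow> 'a) \<Rightarrow> bool" where
  "T_periodic_on_nonneg T x \<longleftrightarrow> (\<forall>t\<ge>0. x (t + T) = x t)"

end

theory Submission
  imports Defs
begin

text \<open>Reflect the second half-wave in the line v = Vdc/2 of the state plane, (i, v) \<mapsto>
  (i, Vdc - v), and move it back by T/2: since A2 differs from A1 only in the sign of the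
  voltage coupling, the reflected trajectory solves the first-half equation x' = A1 x + b1 too.
  The difference of the two solutions is a free damped series RLC circuit on [0, T/2], whose
  energy L i^2 + C v^2 decreases at rate 2 R i^2. Periodicity makes this energy equal at 0 and
  T/2, so the current difference vanishes identically, and then so does the voltage difference;
  at t = 0 this is v(0) + v(T/2) = Vdc. The integral identity is v' = i/C integrated over the
  first half-period.\<close>

lemma A1_b1_nth:
  "(A1 R L C *v x + b1 L Vdc) $ 1 = (- R * x$1 - x$2 + Vdc) / L"
  "(A1 R L C *v x + b1 L Vdc) $ 2 = x$1 / C"
  by (simp_all add: A1_def b1_def matrix_vector_mult_def sum_2 vector_2
      add_divide_distrib diff_divide_distrib)

lemma A2_nth:
  "(A2 R L C *v x) $ 1 = (- R * x$1 + x$2) / L"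
  "(A2 R L C *v x) $ 2 = - x$1 / C"
  by (simp_all add: A2_def matrix_vector_mult_def sum_2 vector_2
      add_divide_distrib diff_divide_distrib)

lemma has_vector_derivative_vec_nth:
  assumes "(x has_vector_derivative D) F"
  shows "((\<lambda>t. x t $ i) has_vector_derivative D $ i) F"
  using bounded_linear.has_vector_derivative[OF bounded_linear_vec_nth assms] .

lemma has_vector_derivative_shift_within:
  assumes "(f has_vector_derivative D) (at (t + h) within (\<lambda>s. s + h) ` S)"
  shows "((\<lambda>s. f (s + h)) has_vector_derivative D) (at t within S)"
proof -
  have "((\<lambda>s. s + h) has_vector_derivative 1) (at t within S)"
    by (auto intro!: derivative_eq_intros)
  from vector_diff_chain_within[OF this assms] show ?thesis
    by (simp add: o_def)
qed

lemma rlc_energy_has_derivative: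
  fixes i v :: "real \<Rightarrow> real"
  assumes "L > 0" "C > 0"
    and "(i has_vector_derivative (- R * i t - v t) / L) (at t within S)"
    and "(v has_vector_derivative i t / C) (at t within S)"
  shows "((\<lambda>t. L * (i t)^2 + C * (v t)^2) has_vector_derivative - (2 * R * (i t)^2))
           (at t within S)"
proof -
  have "((\<lambda>t. L * (i t)^2 + C * (v t)^2) has_real_derivative
          L * (2 * i t * ((- R * i t - v t) / L)) + C * (2 * v t * (i t / C))) (at t within S)"
    using assms(3,4) unfolding has_real_derivative_iff_has_vector_derivative[symmetric]
    by (auto intro!: derivative_eq_intros)
  moreover have "L * (2 * i t * ((- R * i t - v t) / L)) + C * (2 * v t * (i t / C))
                 = - (2 * R * (i t)^2)"
    using assms(1,2) by (simp add: field_simps power2_eq_square)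
  ultimately show ?thesis
    by (simp add: has_real_derivative_iff_has_vector_derivative)
qed

lemma rlc_current_vanishes_if_energy_returns:
  fixes i v :: "real \<Rightarrow> real"
  assumes "R > 0" "L > 0" "C > 0" "a < b"
    and i': "\<And>t. t \<in> {a..b} \<Longrightarrow> (i has_vector_derivative (- R * i t - v t) / L) (at t within {a..b})"
    and v': "\<And>t. t \<in> {a..b} \<Longrightarrow> (v has_vector_derivative i t / C) (at t within {a..b})"
    and energy: "L * (i b)^2 + C * (v b)^2 = L * (i a)^2 + C * (v a)^2"
    and t: "t \<in> {a..b}"
  shows "i t = 0"
proof -
  have "((\<lambda>t. - (2 * R * (i t)^2)) has_integral
          L * (i b)^2 + C * (v b)^2 - (L * (i a)^2 + C * (v a)^2)) {a..b}"
    by (rule fundamental_theorem_of_calculus)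
      (use \<open>a < b\<close> rlc_energy_has_derivative[OF \<open>L > 0\<close> \<open>C > 0\<close> i' v'] in auto)
  then have "((\<lambda>t. - (2 * R * (i t)^2)) has_integral 0) {a..b}"
    by (simp only: energy diff_self)
  from has_integral_neg[OF this] have "((\<lambda>t. 2 * R * (i t)^2) has_integral 0) {a..b}"
    by simp
  moreover have "continuous_on {a..b} i"
    using i' continuous_on_eq_continuous_within has_vector_derivative_continuous by blast
  then have "continuous_on {a..b} (\<lambda>t. 2 * R * (i t)^2)"
    by (intro continuous_intros)
  ultimately have "2 * R * (i t)^2 = 0"
    using has_integral_0_cbox_imp_0[of a b "\<lambda>t. 2 * R * (i t)^2" t] \<open>R > 0\<close> \<open>a < b\<close> t
    by simp
  then show ?thesis
    using \<open>R > 0\<close> by simp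
qed

lemma rlc_voltage_vanishes_if_energy_returns:
  fixes i v :: "real \<Rightarrow> real"
  assumes "R > 0" "L > 0" "C > 0" "a < b"
    and i': "\<And>t. t \<in> {a..b} \<Longrightarrow> (i has_vector_derivative (- R * i t - v t) / L) (at t within {a..b})"
    and v': "\<And>t. t \<in> {a..b} \<Longrightarrow> (v has_vector_derivative i t / C) (at t within {a..b})"
    and energy: "L * (i b)^2 + C * (v b)^2 = L * (i a)^2 + C * (v a)^2"
  shows "v a = 0"
proof -
  have i0: "i t = 0" if "t \<in> {a..b}" for t
    by (rule rlc_current_vanishes_if_energy_returns[OF assms(1-4) i' v' energy that])
  have "(v has_field_derivative 0) (at t within {a..b})" if "t \<in> {a..b}" for t
    using v'[OF that] i0[OF that] by (simp add: has_real_derivative_iff_has_vector_derivative)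
  then obtain c where c: "\<And>t. t \<in> {a..b} \<Longrightarrow> v t = c"
    using has_field_derivative_zero_constant[of "{a..b}" v] by (metis convex_real_interval(5))
  have integrand: "(- R * i t - v t) / L = - c / L" if "t \<in> {a..b}" for t
    using i0[OF that] c[OF that] by simp
  have "((\<lambda>t. (- R * i t - v t) / L) has_integral i b - i a) {a..b}"
    by (rule fundamental_theorem_of_calculus) (use \<open>a < b\<close> i' in auto)
  then have "((\<lambda>t. - c / L) has_integral 0) {a..b}"
    using has_integral_cong[of "{a..b}", OF integrand] i0[of a] i0[of b] \<open>a < b\<close> by simp
  moreover have "((\<lambda>t. - c / L) has_integral (b - a) * (- c / L)) {a..b}"
    using has_integral_const_real[of "- c / L" a b] \<open>a < b\<close> by simp
  ultimately have "(b - a) * (- c / L) = 0"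
    by (rule has_integral_unique[rotated])
  then show ?thesis
    using c[of a] \<open>L > 0\<close> \<open>a < b\<close> by simp
qed

lemma switched_solution_first_half_deriv:
  assumes "switched_solution R L C Vdc T x" "t \<in> {0..T/2}"
  shows "((\<lambda>t. x t $ 1) has_vector_derivative (- R * x t $ 1 - x t $ 2 + Vdc) / L)
           (at t within {0..T/2})"
    and "((\<lambda>t. x t $ 2) has_vector_derivative x t $ 1 / C) (at t within {0..T/2})"
proof -
  have "\<forall>s\<in>{0..T/2}. (x has_vector_derivative A1 R L C *v x s + b1 L Vdc) (at s within {0..T/2})"
    using assms(1) unfolding switched_solution_def by (metis add_0 mult_zero_left of_nat_0)
  then have D: "(x has_vector_derivative A1 R L C *v x t + b1 L Vdc) (at t within {0..T/2})"
    using assms(2) by blast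
  show "((\<lambda>t. x t $ 1) has_vector_derivative (- R * x t $ 1 - x t $ 2 + Vdc) / L)
          (at t within {0..T/2})"
    using has_vector_derivative_vec_nth[OF D, of 1] by (simp only: A1_b1_nth)
  show "((\<lambda>t. x t $ 2) has_vector_derivative x t $ 1 / C) (at t within {0..T/2})"
    using has_vector_derivative_vec_nth[OF D, of 2] by (simp only: A1_b1_nth)
qed

lemma switched_solution_second_half_shifted_deriv:
  assumes "switched_solution R L C Vdc T x" "t \<in> {0..T/2}"
  shows "((\<lambda>t. x (t + T/2) $ 1) has_vector_derivative
            (- R * x (t + T/2) $ 1 + x (t + T/2) $ 2) / L) (at t within {0..T/2})"
    and "((\<lambda>t. x (t + T/2) $ 2) has_vector_derivative - x (t + T/2) $ 1 / C)
           (at t within {0..T/2})"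
proof -
  have half: "(\<lambda>s. s + T/2) ` {0..T/2} = {T/2..T}"
    by simp
  have "\<forall>s\<in>{T/2..T}. (x has_vector_derivative A2 R L C *v x s) (at s within {T/2..T})"
    using assms(1) unfolding switched_solution_def
    by (metis add_0 mult_zero_left of_nat_0 of_nat_1 mult_1 One_nat_def)
  then have "(x has_vector_derivative A2 R L C *v x (t + T/2))
               (at (t + T/2) within (\<lambda>s. s + T/2) ` {0..T/2})"
    using assms(2) unfolding half by simp
  from has_vector_derivative_shift_within[OF has_vector_derivative_vec_nth[OF this]]
  have D: "((\<lambda>s. x (s + T/2) $ i) has_vector_derivative (A2 R L C *v x (t + T/2)) $ i)
             (at t within {0..T/2})" for i .
  show "((\<lambda>t. x (t + T/2) $ 1) has_vector_derivative
          (- R * x (t + T/2) $ 1 + x (t + T/2) $ 2) / L) (at t within {0..T/2})"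
    using D[of 1] by (simp only: A2_nth)
  show "((\<lambda>t. x (t + T/2) $ 2) has_vector_derivative - x (t + T/2) $ 1 / C)
          (at t within {0..T/2})"
    using D[of 2] by (simp only: A2_nth)
qed

lemma periodic_switched_solution_half_wave_voltage_sum:
  assumes "R > 0" "L > 0" "C > 0" "T > 0"
    and sol: "switched_solution R L C Vdc T x"
    and per: "T_periodic_on_nonneg T x"
  shows "x 0 $ 2 + x (T/2) $ 2 = Vdc"
proof -
  define di where "di t = x t $ 1 - x (t + T/2) $ 1" for t
  define dv where "dv t = x t $ 2 + x (t + T/2) $ 2 - Vdc" for t
  have di': "(di has_vector_derivative (- R * di t - dv t) / L) (at t within {0..T/2})"
    if "t \<in> {0..T/2}" for t
  proof -
    have "(di has_vector_derivative (- R * x t $ 1 - x t $ 2 + Vdc) / L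
            - (- R * x (t + T/2) $ 1 + x (t + T/2) $ 2) / L) (at t within {0..T/2})"
      unfolding di_def[abs_def]
      using switched_solution_first_half_deriv(1)[OF sol that]
        switched_solution_second_half_shifted_deriv(1)[OF sol that]
      by (rule derivative_intros)
    then show ?thesis
      unfolding di_def dv_def by (simp add: diff_divide_distrib[symmetric] algebra_simps)
  qed
  have dv': "(dv has_vector_derivative di t / C) (at t within {0..T/2})"
    if "t \<in> {0..T/2}" for t
  proof -
    have "(dv has_vector_derivative x t $ 1 / C + - x (t + T/2) $ 1 / C - 0)
            (at t within {0..T/2})"
      unfolding dv_def[abs_def]
      using switched_solution_first_half_deriv(2)[OF sol that]
        switched_solution_second_half_shifted_deriv(2)[OF sol that]
      by (intro derivative_intros)
    then show ?thesis
      unfolding di_def by (simp add: diff_divide_distrib)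
  qed
  have "x T = x 0"
    using per unfolding T_periodic_on_nonneg_def by (metis add_0 order_refl)
  then have "L * (di (T/2))^2 + C * (dv (T/2))^2 = L * (di 0)^2 + C * (dv 0)^2"
    unfolding di_def dv_def by (simp add: algebra_simps power2_eq_square)
  from rlc_voltage_vanishes_if_energy_returns[OF assms(1-3) _ di' dv' this] \<open>T > 0\<close>
  show ?thesis
    unfolding dv_def by simp
qed

theorem mainTheorem5:
  fixes R L C Vdc T :: real and xp :: "real \<Rightarrow> real^2"
  assumes "R > 0" "L > 0" "C > 0" "Vdc > 0" "T > 0"
    and "switched_solution R L C Vdc T xp"
    and "T_periodic_on_nonneg T xp"
  shows "integral {0..T/2} (\<lambda>t. xp t $ 1) = C / Vdc * ((xp (T/2) $ 2)^2 - (xp 0 $ 2)^2)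
       \<and> C / Vdc * ((xp (T/2) $ 2)^2 - (xp 0 $ 2)^2) = C * (xp (T/2) $ 2 - xp 0 $ 2)
       \<and> xp 0 $ 2 + xp (T/2) $ 2 = Vdc"
proof -
  have sym: "xp 0 $ 2 + xp (T/2) $ 2 = Vdc"
    using periodic_switched_solution_half_wave_voltage_sum assms(1-3,5-7) .
  have "((\<lambda>t. xp t $ 1 / C) has_integral xp (T/2) $ 2 - xp 0 $ 2) {0..T/2}"
    using fundamental_theorem_of_calculus[of 0 "T/2" "\<lambda>t. xp t $ 2"]
      switched_solution_first_half_deriv(2)[OF assms(6)] \<open>T > 0\<close>
    by simp
  from has_integral_mult_right[OF this, of C]
  have int: "integral {0..T/2} (\<lambda>t. xp t $ 1) = C * (xp (T/2) $ 2 - xp 0 $ 2)"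
    using \<open>C > 0\<close> by (simp add: integral_unique)
  have "(xp (T/2) $ 2)^2 - (xp 0 $ 2)^2 = (xp (T/2) $ 2 - xp 0 $ 2) * (xp 0 $ 2 + xp (T/2) $ 2)"
    by (simp add: power2_eq_square algebra_simps)
  then have sq: "C / Vdc * ((xp (T/2) $ 2)^2 - (xp 0 $ 2)^2) = C * (xp (T/2) $ 2 - xp 0 $ 2)"
    using sym \<open>Vdc > 0\<close> by simp
  show ?thesis
    using int sq sym by simp
qed

end
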